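(* Let $G$ be an oriented graph, let $k>0$, and let $P$ be an oriented path of length $n$ with $l=l(P)\ge 1$. If $G$ has a $k$-mindegree pair, then either $G$ contains a copy of $P$ as a subgraph, or $G$ contains an independent set of size at least $\frac{k-n}{l}$.
   Context: An oriented graph is a directed graph without loops and with at most one edge between any two vertices. An oriented path is a path whose edges are oriented arbitrarily; its length is its number of edges, and $l(P)$ is the length of its longest directed subpath. An independent set is a set of vertices spanning no edges. For a directed graph $G$, a $k$-mindegree pair is a pair $(X,Y)$ of disjoint non-empty subsets of $V(G)$ such that every vertex of $X$ has at least $k$ out-neighbours in $Y$ and every vertex of $Y$ has at least $k$ in-neighbours in $X$. *)

theory Defs
  imports Complex_Main
begin

definition oriented_graph :: "'a set \<Rightarrow> ('a \<Rightarrow> 'a \<Rightarrow> bool) \<Rightarrow> bool" where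
  "oriented_graph V E \<longleftrightarrow> finite V
     \<and> (\<forall>u v. E u v \<longrightarrow> u \<in> V \<and> v \<in> V)
     \<and> (\<forall>u. \<not> E u u)
     \<and> (\<forall>u v. E u v \<longrightarrow> \<not> E v u)"

text \<open>An oriented path of length n is encoded by the list of the orientations of
  its n consecutive edges: entry i is True iff the i-th edge goes from vertex i
  to vertex i+1, False iff it goes from vertex i+1 to vertex i.\<close>

definition path_length :: "bool list \<Rightarrow> nat" where
  "path_length P = length P"

text \<open>l(P): the length of a longest directed subpath, i.e. the longest run of
  consecutive edges with the same orientation.\<close>

definition longest_directed :: "bool list \<Rightarrow> nat" where
  "longest_directed P = Max {m. \<exists>i. i + m \<le> length P \<and> (\<forall>j<m. P ! (i + j) = P ! i)}"

definition contains_path :: "'a set \<Rightarrow> ('a \<Rightarrow> 'a \<Rightarrow> bool) \<Rightarrow> bool list \<Rightarrow> bool" where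
  "contains_path V E P \<longleftrightarrow> (\<exists>f. inj_on f {0..length P} \<and> f ` {0..length P} \<subseteq> V
     \<and> (\<forall>i < length P. if P ! i then E (f i) (f (Suc i)) else E (f (Suc i)) (f i)))"

definition independent_set :: "'a set \<Rightarrow> ('a \<Rightarrow> 'a \<Rightarrow> bool) \<Rightarrow> 'a set \<Rightarrow> bool" where
  "independent_set V E S \<longleftrightarrow> S \<subseteq> V \<and> (\<forall>u\<in>S. \<forall>v\<in>S. \<not> E u v)"

definition mindegree_pair :: "'a set \<Rightarrow> ('a \<Rightarrow> 'a \<Rightarrow> bool) \<Rightarrow> nat \<Rightarrow> 'a set \<Rightarrow> 'a set \<Rightarrow> bool" where
  "mindegree_pair V E k X Y \<longleftrightarrow> X \<subseteq> V \<and> Y \<subseteq> V \<and> X \<inter> Y = {} \<and> X \<noteq> {} \<and> Y \<noteq> {}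
     \<and> (\<forall>x\<in>X. card {y\<in>Y. E x y} \<ge> k)
     \<and> (\<forall>y\<in>Y. card {x\<in>X. E x y} \<ge> k)"

end

theory Submission
  imports Defs
begin

text \<open>Suppose every independent set has fewer than (k - n)/l vertices. By the Gallai--Roy
  theorem, a digraph on a vertex set W whose independent sets all have fewer than |W|/r vertices
  contains a directed path on r vertices. P is embedded greedily, one maximal directed run at a
  time, avoiding the vertices used so far, of which there are fewer than n. A forward run of
  length r \<le> l starting at x \<in> X is found among the unused out-neighbours of x in Y: there are
  at least k - n of them, which is more than l, hence r, times the size of any independent set.
  The run ends in Y, where the next, backward run can start; backward runs are handled by
  reversing all edges and swapping X and Y.\<close>

section \<open>The Gallai--Roy theorem\<close>

lemma acyclic_walk_inj_on:
  assumes "acyclic R" and walk: "\<forall>i<n. (g i, g (Suc i)) \<in> R"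
  shows "inj_on g {..n}"
proof (rule linorder_inj_onI')
  fix i j assume "i \<in> {..n}" "j \<in> {..n}" "i < j"
  then have "(g i, g j) \<in> R ^^ (j - i)"
    unfolding relpow_fun_conv using walk by (intro exI[of _ "\<lambda>t. g (i + t)"]) auto
  then have "(g i, g j) \<in> R\<^sup>+"
    using \<open>i < j\<close> trancl_power by (metis zero_less_diff)
  then show "g i \<noteq> g j"
    using \<open>acyclic R\<close> unfolding acyclic_def by auto
qed

lemma acyclic_relpow_imp_distinct_path:
  assumes "acyclic R" and "(u, v) \<in> R ^^ m"
  shows "\<exists>hs. length hs = Suc m \<and> distinct hs \<and> set hs \<subseteq> insert u (Range R)
    \<and> successively (\<lambda>a b. (a, b) \<in> R) hs"
proof -
  obtain g where g0: "g 0 = u" and walk: "\<forall>i<m. (g i, g (Suc i)) \<in> R"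
    using assms(2) unfolding relpow_fun_conv by blast
  have inj: "inj_on g {..m}"
    using acyclic_walk_inj_on[OF assms(1) walk] .
  have in_range: "g i \<in> insert u (Range R)" if "i \<le> m" for i
  proof (cases i)
    case (Suc j)
    then show ?thesis using that walk by (metis Suc_le_lessD Range.intros insertCI)
  qed (simp add: g0)
  define hs where "hs = map g [0..<Suc m]"
  have len: "length hs = Suc m" and nth: "i \<le> m \<Longrightarrow> hs ! i = g i" for i
    unfolding hs_def by (simp_all del: upt_Suc)
  have set_hs: "set hs = g ` {..m}"
    unfolding hs_def by (simp add: atLeast0LessThan lessThan_Suc_atMost del: upt_Suc)
  have "distinct hs"
    using inj len by (simp add: card_distinct set_hs card_image)
  moreover have "set hs \<subseteq> insert u (Range R)"
    using in_range unfolding set_hs by blast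
  moreover have "successively (\<lambda>a b. (a, b) \<in> R) hs"
    unfolding successively_conv_nth len using walk nth by simp
  ultimately show ?thesis using len by blast
qed

lemma relpow_free_imp_grading:
  assumes "R \<subseteq> W \<times> W" and no_walk: "\<forall>u\<in>W. \<forall>v. (u, v) \<notin> R ^^ m"
  shows "\<exists>d. (\<forall>v\<in>W. d v < m) \<and> (\<forall>u v. (u, v) \<in> R\<^sup>+ \<longrightarrow> d u < d v)"
proof -
  define D where "D v = {j. \<exists>u\<in>W. (u, v) \<in> R ^^ j}" for v
  have D_bound: "D v \<subseteq> {..<m}" for v
  proof
    fix j assume "j \<in> D v"
    then obtain u where u: "u \<in> W" "(u, v) \<in> R ^^ j"
      unfolding D_def by blast
    show "j \<in> {..<m}"
    proof (rule ccontr)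
      assume "j \<notin> {..<m}"
      then have "(u, v) \<in> R ^^ (m + (j - m))" using u by simp
      then show False
        using no_walk u(1) by (auto simp: relpow_add)
    qed
  qed
  define d where "d v = Max (D v)" for v
  have d_in_D: "d v \<in> D v" if "v \<in> W" for v
  proof -
    have "0 \<in> D v" using that unfolding D_def by auto
    then show ?thesis
      unfolding d_def using D_bound finite_subset by (intro Max_in) blast+
  qed
  have "d u < d v" if uv: "(u, v) \<in> R\<^sup>+" for u v
  proof -
    obtain p where "p > 0" and p: "(u, v) \<in> R ^^ p"
      using uv unfolding trancl_power by blast
    have "u \<in> W"
      using trancl_subset_Sigma[OF assms(1)] uv by blast
    then obtain w where "w \<in> W" and w: "(w, u) \<in> R ^^ d u"
      using d_in_D unfolding D_def by blast
    have "(w, v) \<in> R ^^ (d u + p)"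
      unfolding relpow_add using w p by (rule relcompI)
    with \<open>w \<in> W\<close> have "d u + p \<in> D v"
      unfolding D_def by blast
    then have "d u + p \<le> d v"
      unfolding d_def using D_bound finite_subset by (intro Max_ge) blast+
    with \<open>p > 0\<close> show ?thesis by simp
  qed
  moreover have "d v < m" if "v \<in> W" for v
    using d_in_D[OF that] D_bound by blast
  ultimately show ?thesis by blast
qed

lemma finite_maximal_acyclic_subset:
  assumes "finite S"
  shows "\<exists>R\<subseteq>S. acyclic R \<and> (\<forall>(u, v)\<in>S - R. (v, u) \<in> R\<^sup>*)"
proof -
  define F where "F = {R. R \<subseteq> S \<and> acyclic R}"
  have "finite F" "{} \<in> F"
    unfolding F_def using assms by (auto simp: acyclic_def)
  then obtain R where "R \<in> F" and maximal: "\<And>R'. R' \<in> F \<Longrightarrow> R \<subseteq> R' \<Longrightarrow> R = R'"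
    using finite_has_maximal by (metis empty_iff)
  have "(v, u) \<in> R\<^sup>*" if "(u, v) \<in> S - R" for u v
  proof (rule ccontr)
    assume "(v, u) \<notin> R\<^sup>*"
    then have "insert (u, v) R \<in> F"
      using \<open>R \<in> F\<close> that unfolding F_def by auto
    with maximal that show False by blast
  qed
  with \<open>R \<in> F\<close> show ?thesis
    unfolding F_def by blast
qed

text \<open>The colour of a vertex is the length of a longest walk ending at it in a maximal acyclic
  subdigraph.\<close>

lemma gallai_roy_colouring:
  assumes "finite W" and loopless: "\<forall>u. \<not> E u u"
    and no_path: "\<nexists>hs. length hs = r \<and> distinct hs \<and> set hs \<subseteq> W \<and> successively E hs"
  shows "\<exists>c. (\<forall>v\<in>W. c v < r - 1) \<and> (\<forall>u\<in>W. \<forall>v\<in>W. E u v \<longrightarrow> c u \<noteq> c v)"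
proof -
  define S where "S = {(u, v). u \<in> W \<and> v \<in> W \<and> E u v}"
  have "finite S"
    using assms(1) by (auto simp: S_def intro: finite_subset[of _ "W \<times> W"])
  then obtain R where "R \<subseteq> S" "acyclic R" and reversed: "\<forall>(u, v)\<in>S - R. (v, u) \<in> R\<^sup>*"
    using finite_maximal_acyclic_subset by blast
  have "R \<subseteq> W \<times> W"
    using \<open>R \<subseteq> S\<close> unfolding S_def by auto
  have "r \<noteq> 0"
    using no_path by fastforce
  have "(u, v) \<notin> R ^^ (r - 1)" if "u \<in> W" for u v
  proof
    assume "(u, v) \<in> R ^^ (r - 1)"
    then obtain hs where "length hs = r" "distinct hs" "set hs \<subseteq> insert u (Range R)"
      and R_path: "successively (\<lambda>a b. (a, b) \<in> R) hs"
      using acyclic_relpow_imp_distinct_path[OF \<open>acyclic R\<close>] \<open>r \<noteq> 0\<close> by fastforce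
    moreover have "set hs \<subseteq> W"
      using \<open>set hs \<subseteq> insert u (Range R)\<close> \<open>R \<subseteq> W \<times> W\<close> that by blast
    moreover have "successively E hs"
      using R_path by (rule successively_mono) (use \<open>R \<subseteq> S\<close> S_def in auto)
    ultimately show False
      using no_path by blast
  qed
  then obtain d where "\<forall>v\<in>W. d v < r - 1" and d_mono: "\<forall>u v. (u, v) \<in> R\<^sup>+ \<longrightarrow> d u < d v"
    using relpow_free_imp_grading[OF \<open>R \<subseteq> W \<times> W\<close>] by blast
  moreover have "d u \<noteq> d v" if "u \<in> W" "v \<in> W" "E u v" for u v
  proof (cases "(u, v) \<in> R")
    case True
    then show ?thesis using d_mono by fastforce
  next
    case False
    then have "(v, u) \<in> R\<^sup>*" "v \<noteq> u"
      using reversed that loopless unfolding S_def by auto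
    then have "(v, u) \<in> R\<^sup>+"
      by (simp add: rtrancl_eq_or_trancl)
    then show ?thesis using d_mono by fastforce
  qed
  ultimately show ?thesis by blast
qed

lemma directed_path_if_independent_sets_small:
  assumes "finite W" and "\<forall>u. \<not> E u u" and "0 < r"
    and small: "\<forall>S. independent_set W E S \<longrightarrow> card S * r < card W"
  shows "\<exists>hs. length hs = r \<and> distinct hs \<and> set hs \<subseteq> W \<and> successively E hs"
proof (rule ccontr)
  assume "\<not> ?thesis"
  then obtain c where colour_bound: "\<forall>v\<in>W. c v < r - 1"
    and proper: "\<forall>u\<in>W. \<forall>v\<in>W. E u v \<longrightarrow> c u \<noteq> c v"
    using gallai_roy_colouring[of W E r] assms(1,2) by blast
  define L where "L j = {v\<in>W. c v = j}" for j
  have class_small: "card (L j) * r \<le> card W - 1" for j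
  proof -
    have "independent_set W E (L j)"
      using proper unfolding independent_set_def L_def by blast
    with small show ?thesis by fastforce
  qed
  have "W = (\<Union>j<r - 1. L j)"
    using colour_bound unfolding L_def by auto
  then have "card W * r \<le> (\<Sum>j<r - 1. card (L j)) * r"
    using card_UN_le[of "{..<r - 1}" L] by simp
  also have "\<dots> = (\<Sum>j<r - 1. card (L j) * r)"
    by (simp add: sum_distrib_right)
  also have "\<dots> \<le> (r - 1) * (card W - 1)"
    using sum_bounded_above[of "{..<r - 1}" "\<lambda>j. card (L j) * r" "card W - 1"] class_small
    by simp
  also have "\<dots> \<le> (r - 1) * card W"
    by simp
  also have "\<dots> < r * card W"
    using small[rule_format, of "{}"] \<open>0 < r\<close> by (simp add: independent_set_def)
  finally show False by simp
qed

section \<open>Oriented walks and directed runs\<close>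

lemma le_longest_directed:
  assumes "i + m \<le> length P" and "\<forall>j<m. P ! (i + j) = P ! i"
  shows "m \<le> longest_directed P"
  unfolding longest_directed_def
proof (rule Max_ge)
  show "finite {m. \<exists>i. i + m \<le> length P \<and> (\<forall>j<m. P ! (i + j) = P ! i)}"
    by (rule finite_subset[of _ "{..length P}"]) auto
qed (use assms in blast)

lemma longest_directed_attained:
  "\<exists>i. i + longest_directed P \<le> length P \<and> (\<forall>j<longest_directed P. P ! (i + j) = P ! i)"
proof -
  let ?M = "{m. \<exists>i. i + m \<le> length P \<and> (\<forall>j<m. P ! (i + j) = P ! i)}"
  have "finite ?M"
    by (rule finite_subset[of _ "{..length P}"]) auto
  moreover have "0 \<in> ?M"
    by auto
  ultimately have "Max ?M \<in> ?M"
    using Max_in[of ?M] by blast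
  then show ?thesis
    unfolding longest_directed_def by blast
qed

lemma longest_directed_append_right: "longest_directed ys \<le> longest_directed (xs @ ys)"
proof -
  obtain i where "i + longest_directed ys \<le> length ys"
    and "\<forall>j<longest_directed ys. ys ! (i + j) = ys ! i"
    using longest_directed_attained by blast
  moreover have "(xs @ ys) ! (length xs + t) = ys ! t" for t
    by (rule nth_append_length_plus)
  ultimately show ?thesis
    by (intro le_longest_directed[where i = "length xs + i"]) (simp_all add: add.assoc)
qed

lemma replicate_le_longest_directed: "r \<le> longest_directed (replicate r b @ ys)"
  by (rule le_longest_directed[where i = 0]) (auto simp: nth_append)

lemma run_decomposition:
  assumes "Q \<noteq> []"
  obtains r Q' where "Q = replicate r (hd Q) @ Q'" and "0 < r"
    and "Q' \<noteq> [] \<Longrightarrow> hd Q' = (\<not> hd Q)"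
proof
  let ?run = "takeWhile (\<lambda>x. x = hd Q) Q" and ?rest = "dropWhile (\<lambda>x. x = hd Q) Q"
  have "replicate (length ?run) (hd Q) = ?run"
    by (rule replicate_length_same) (auto dest: set_takeWhileD)
  then show "Q = replicate (length ?run) (hd Q) @ ?rest"
    by simp
  show "0 < length ?run"
    using assms by (cases Q) auto
  show "hd ?rest = (\<not> hd Q)" if "?rest \<noteq> []"
    using hd_dropWhile[OF that] by blast
qed

definition oriented_walk :: "('a \<Rightarrow> 'a \<Rightarrow> bool) \<Rightarrow> bool list \<Rightarrow> 'a list \<Rightarrow> bool" where
  "oriented_walk E Q vs \<longleftrightarrow> length vs = Suc (length Q)
     \<and> (\<forall>i<length Q. if Q ! i then E (vs ! i) (vs ! Suc i) else E (vs ! Suc i) (vs ! i))"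

lemma oriented_walk_Nil: "oriented_walk E [] [v]"
  by (simp add: oriented_walk_def)

lemma oriented_walk_replicate:
  assumes "successively (\<lambda>u w. if b then E u w else E w u) (v # hs)"
  shows "oriented_walk E (replicate (length hs) b) (v # hs)"
  using assms unfolding oriented_walk_def successively_conv_nth by simp

lemma oriented_walk_append:
  assumes ws: "oriented_walk E Q ws" and vs: "oriented_walk E Q' vs" and "hd vs = last ws"
  shows "oriented_walk E (Q @ Q') (butlast ws @ vs)"
proof -
  have len_ws: "length ws = Suc (length Q)" and len_vs: "length vs = Suc (length Q')"
    using ws vs unfolding oriented_walk_def by auto
  then have len_butlast: "length (butlast ws) = length Q"
    by simp
  have low: "(butlast ws @ vs) ! i = ws ! i" if "i \<le> length Q" for i
  proof (cases "i < length Q")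
    case True
    then show ?thesis using len_butlast by (simp add: nth_append nth_butlast)
  next
    case False
    then have "i = length Q" using that by simp
    moreover have "vs ! 0 = hd vs"
      using len_vs by (cases vs) auto
    moreover have "last ws = ws ! length Q"
      using len_ws by (subst last_conv_nth) auto
    ultimately show ?thesis
      using len_butlast \<open>hd vs = last ws\<close> by (simp add: nth_append)
  qed
  have high: "(butlast ws @ vs) ! (length Q + t) = vs ! t" for t
    using nth_append_length_plus[of "butlast ws" vs t] len_butlast by simp
  show ?thesis
    unfolding oriented_walk_def
  proof (intro conjI allI impI)
    show "length (butlast ws @ vs) = Suc (length (Q @ Q'))"
      using len_butlast len_vs by simp
    fix i assume "i < length (Q @ Q')"
    show "if (Q @ Q') ! i then E ((butlast ws @ vs) ! i) ((butlast ws @ vs) ! Suc i)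
      else E ((butlast ws @ vs) ! Suc i) ((butlast ws @ vs) ! i)"
    proof (cases "i < length Q")
      case True
      then show ?thesis
        using ws low[of i] low[of "Suc i"] unfolding oriented_walk_def by (simp add: nth_append)
    next
      case False
      then obtain t where "i = length Q + t" "t < length Q'"
        using \<open>i < length (Q @ Q')\<close> by (intro that[of "i - length Q"]) auto
      then show ?thesis
        using vs high[of t] high[of "Suc t"] unfolding oriented_walk_def by (simp add: nth_append)
    qed
  qed
qed

lemma contains_path_if_oriented_walk:
  assumes "oriented_walk E P vs" and "distinct vs" and "set vs \<subseteq> V"
  shows "contains_path V E P"
  unfolding contains_path_def
proof (intro exI conjI)
  show "inj_on ((!) vs) {0..length P}"
    using assms(1,2) by (intro inj_on_nth) (auto simp: oriented_walk_def)
  show "(!) vs ` {0..length P} \<subseteq> V"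
    using assms(1,3) nth_mem by (fastforce simp: oriented_walk_def)
qed (use assms(1) in \<open>simp add: oriented_walk_def\<close>)

section \<open>Greedy embedding\<close>

lemma mindegree_pair_converse:
  "mindegree_pair V E k X Y \<Longrightarrow> mindegree_pair V (\<lambda>u v. E v u) k Y X"
  unfolding mindegree_pair_def by auto

lemma independent_set_converse:
  "independent_set V (\<lambda>u v. E v u) S \<longleftrightarrow> independent_set V E S"
  unfolding independent_set_def by blast

lemma directed_run_from_mindegree_pair:
  assumes "finite V" and loopless: "\<forall>u. \<not> E u u" and pair: "mindegree_pair V E k X Y"
    and "x \<in> X" and small: "\<forall>S. independent_set V E S \<longrightarrow> card S * l + n < k"
    and "finite U" and "card U \<le> n" and "0 < r" and "r \<le> l"
  shows "\<exists>hs. length hs = r \<and> distinct (x # hs) \<and> set hs \<subseteq> Y - U \<and> successively E (x # hs)"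
proof -
  define W where "W = {y\<in>Y. E x y} - U"
  have "W \<subseteq> V"
    using pair unfolding W_def mindegree_pair_def by auto
  have "k \<le> card {y\<in>Y. E x y}"
    using pair \<open>x \<in> X\<close> unfolding mindegree_pair_def by blast
  moreover have "card {y\<in>Y. E x y} - card U \<le> card W"
    unfolding W_def using \<open>finite U\<close> by (rule diff_card_le_card_Diff)
  ultimately have "k - n \<le> card W"
    using \<open>card U \<le> n\<close> by linarith
  have "card S * r < card W" if "independent_set W E S" for S
  proof -
    have "card S * l + n < k"
      using small that \<open>W \<subseteq> V\<close> unfolding independent_set_def by blast
    moreover have "card S * r \<le> card S * l"
      using \<open>r \<le> l\<close> by simp
    ultimately show ?thesis
      using \<open>k - n \<le> card W\<close> by linarith
  qed
  moreover have "finite W"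
    using \<open>W \<subseteq> V\<close> \<open>finite V\<close> by (rule finite_subset)
  ultimately obtain hs where hs: "length hs = r" "distinct hs" "set hs \<subseteq> W" "successively E hs"
    using directed_path_if_independent_sets_small[of W E r] loopless \<open>0 < r\<close> by blast
  moreover have "E x (hd hs)"
    using hs(1,3) \<open>0 < r\<close> unfolding W_def by (cases hs) auto
  moreover have "x \<notin> W"
    using loopless unfolding W_def by blast
  ultimately show ?thesis
    unfolding W_def by (intro exI[of _ hs]) (auto simp: successively_Cons)
qed

lemma oriented_run_from_mindegree_pair:
  assumes "finite V" and loopless: "\<forall>u. \<not> E u u" and pair: "mindegree_pair V E k X Y"
    and small: "\<forall>S. independent_set V E S \<longrightarrow> card S * l + n < k"
    and "finite U" and "card U \<le> n" and "0 < r" and "r \<le> l"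
    and v: "v \<in> (if b then X else Y)"
  shows "\<exists>hs. length hs = r \<and> distinct (v # hs) \<and> set hs \<subseteq> (if b then Y else X) - U
    \<and> successively (\<lambda>u w. if b then E u w else E w u) (v # hs)"
proof (cases b)
  case True
  with v have "v \<in> X"
    by simp
  with directed_run_from_mindegree_pair[OF assms(1,2) pair _ small assms(5-8)] True
  show ?thesis
    by simp
next
  case False
  with v have "v \<in> Y"
    by simp
  have "\<forall>u. \<not> (\<lambda>u v. E v u) u u"
    using loopless by simp
  moreover have "\<forall>S. independent_set V (\<lambda>u v. E v u) S \<longrightarrow> card S * l + n < k"
    using small unfolding independent_set_converse[of V E] .
  ultimately have "\<exists>hs. length hs = r \<and> distinct (v # hs) \<and> set hs \<subseteq> X - U
      \<and> successively (\<lambda>u w. E w u) (v # hs)"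
    by (rule directed_run_from_mindegree_pair[OF assms(1) _ mindegree_pair_converse[OF pair]
          \<open>v \<in> Y\<close> _ assms(5-8)])
  with False show ?thesis
    by simp
qed

lemma oriented_walk_prepend_run:
  assumes "successively (\<lambda>u w. if b then E u w else E w u) (v # hs @ [w])"
    and "oriented_walk E Q vs" and "hd vs = w"
  shows "oriented_walk E (replicate (Suc (length hs)) b @ Q) (v # hs @ vs)"
  using oriented_walk_append[OF oriented_walk_replicate[OF assms(1)] assms(2)] assms(3)
  by (simp flip: append_Cons)

lemma oriented_walk_embedding:
  assumes "finite V" and "\<forall>u. \<not> E u u" and pair: "mindegree_pair V E k X Y"
    and small: "\<forall>S. independent_set V E S \<longrightarrow> card S * l + n < k"
  shows "longest_directed Q \<le> l \<Longrightarrow> finite U \<Longrightarrow> card U + length Q \<le> n \<Longrightarrow> v \<in> V - U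
    \<Longrightarrow> (Q \<noteq> [] \<Longrightarrow> v \<in> (if hd Q then X else Y))
    \<Longrightarrow> \<exists>vs. oriented_walk E Q vs \<and> hd vs = v \<and> distinct vs \<and> set vs \<subseteq> V - U"
proof (induction "length Q" arbitrary: Q U v rule: less_induct)
  case less
  show ?case
  proof (cases "Q = []")
    case True
    with less.prems show ?thesis
      by (intro exI[of _ "[v]"]) (simp add: oriented_walk_Nil)
  next
    case False
    define b where "b = hd Q"
    obtain r Q' where Q: "Q = replicate r b @ Q'" and "0 < r"
      and next_run: "Q' \<noteq> [] \<Longrightarrow> hd Q' = (\<not> b)"
      using run_decomposition[OF False, folded b_def] by blast
    have "r \<le> l"
      using replicate_le_longest_directed[of r b Q'] less.prems(1) Q by simp
    define Z where "Z = (if b then Y else X)"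
    have "Z \<subseteq> V"
      using pair unfolding Z_def mindegree_pair_def by auto
    have "card U \<le> n"
      using less.prems(3) by simp
    have "v \<in> (if b then X else Y)"
      using less.prems(5) False unfolding b_def by blast
    then obtain hs0 where "length hs0 = r" "distinct (v # hs0)" "set hs0 \<subseteq> Z - U"
      and run0: "successively (\<lambda>u w. if b then E u w else E w u) (v # hs0)"
      using oriented_run_from_mindegree_pair[OF assms less.prems(2) \<open>card U \<le> n\<close> \<open>0 < r\<close> \<open>r \<le> l\<close>]
      unfolding Z_def by blast
    then obtain hs w where "hs0 = hs @ [w]"
      using \<open>0 < r\<close> by (cases hs0 rule: rev_cases) auto
    with \<open>length hs0 = r\<close> \<open>distinct (v # hs0)\<close> \<open>set hs0 \<subseteq> Z - U\<close> run0
    have "Suc (length hs) = r" "distinct (v # hs @ [w])" "set (hs @ [w]) \<subseteq> Z - U"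
      and run: "successively (\<lambda>u w. if b then E u w else E w u) (v # hs @ [w])"
      by simp_all
    define U' where "U' = insert v (U \<union> set hs)"
    have "card U' \<le> Suc (card U + length hs)"
      unfolding U'_def using less.prems(2) card_Un_le[of U "set hs"] card_length[of hs]
      by (simp add: card_insert_if)
    then have "card U' + length Q' \<le> n"
      using less.prems(3) Q \<open>Suc (length hs) = r\<close> by simp
    moreover have "w \<in> V - U'"
      using \<open>distinct (v # hs @ [w])\<close> \<open>set (hs @ [w]) \<subseteq> Z - U\<close> \<open>Z \<subseteq> V\<close>
      unfolding U'_def by auto
    moreover have "w \<in> (if hd Q' then X else Y)" if "Q' \<noteq> []"
      using next_run[OF that] \<open>set (hs @ [w]) \<subseteq> Z - U\<close> unfolding Z_def by auto
    moreover have "longest_directed Q' \<le> l"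
      using longest_directed_append_right[of Q' "replicate r b"] less.prems(1) Q by simp
    moreover have "length Q' < length Q"
      using Q \<open>0 < r\<close> by simp
    moreover have "finite U'"
      unfolding U'_def using less.prems(2) by simp
    ultimately obtain vs' where "oriented_walk E Q' vs'" "hd vs' = w" "distinct vs'"
      and "set vs' \<subseteq> V - U'"
      using less.hyps by blast
    then show ?thesis
      using oriented_walk_prepend_run[OF run] Q \<open>Suc (length hs) = r\<close> \<open>distinct (v # hs @ [w])\<close>
        \<open>set (hs @ [w]) \<subseteq> Z - U\<close> \<open>Z \<subseteq> V\<close> less.prems(4)
      unfolding U'_def by (intro exI[of _ "v # hs @ vs'"]) auto
  qed
qed

lemma contains_path_if_independent_sets_small:
  assumes "oriented_graph V E" and pair: "mindegree_pair V E k X Y"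
    and small: "\<forall>S. independent_set V E S \<longrightarrow> card S * longest_directed P + length P < k"
  shows "contains_path V E P"
proof -
  have "finite V" "\<forall>u. \<not> E u u"
    using assms(1) unfolding oriented_graph_def by auto
  obtain v where v: "v \<in> (if P \<noteq> [] \<and> \<not> hd P then Y else X)"
    using pair unfolding mindegree_pair_def by (metis all_not_in_conv)
  then have "v \<in> V"
    using pair unfolding mindegree_pair_def by (auto split: if_splits)
  then obtain vs where "oriented_walk E P vs" "distinct vs" "set vs \<subseteq> V"
    using oriented_walk_embedding[OF \<open>finite V\<close> \<open>\<forall>u. \<not> E u u\<close> pair small, of P "{}" v] v
    by (auto split: if_splits)
  then show ?thesis
    by (rule contains_path_if_oriented_walk)
qed

theorem mainTheorem7:
  fixes V :: "'a set" and E :: "'a \<Rightarrow> 'a \<Rightarrow> bool" and k :: nat and P :: "bool list"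
  assumes "oriented_graph V E"
    and "k > 0"
    and "longest_directed P \<ge> 1"
    and "\<exists>X Y. mindegree_pair V E k X Y"
  shows "contains_path V E P \<or>
    (\<exists>S. independent_set V E S \<and>
       real (card S) \<ge> (real k - real (path_length P)) / real (longest_directed P))"
proof (rule disjCI)
  assume no_large: "\<not> (\<exists>S. independent_set V E S \<and>
       real (card S) \<ge> (real k - real (path_length P)) / real (longest_directed P))"
  have "card S * longest_directed P + length P < k" if "independent_set V E S" for S
  proof -
    have "real (card S) < (real k - real (length P)) / real (longest_directed P)"
      using no_large that unfolding path_length_def by auto
    then have "real (card S * longest_directed P + length P) < real k"
      using assms(3) by (simp add: less_divide_eq)
    then show ?thesis
      by linarith
  qed
  moreover obtain X Y where "mindegree_pair V E k X Y"
    using assms(4) by blast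
  ultimately show "contains_path V E P"
    using contains_path_if_independent_sets_small assms(1) by blast
qed

end
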